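(* Let $I$ be an infinite set, $\mathcal U\subseteq P(I)$ a non-principal ultrafilter, and $\mathbb X_i=\langle X_i,\rho_i\rangle$ ($i\in I$) $L$-structures. (a) If $\{i\in I:\mathbb X_i\models\varphi^{\rm conn}_n\}\in\mathcal U$ for some $n\in\omega$, then the ultraproduct $\prod_{\mathcal U}\mathbb X_i$ is connected; if moreover $|I|$ is smaller than the first measurable cardinal, the converse also holds. (b) For an $L$-structure $\mathbb X$: if $\mathbb X$ is of finite diameter then the ultrapower $\prod_{\mathcal U}\mathbb X$ is connected; if moreover $|I|$ is smaller than the first measurable cardinal, the converse also holds.
   Context: $L$ is a language with one binary relation symbol; an $L$-structure is $\mathbb X=\langle X,\rho\rangle$, $X\neq\emptyset$, $\rho\subseteq X^2$. Connectivity is defined via the reflexivization $\rho_R=\rho\cup\{(x,x):x\in X\}$: write $\rho_R^0=\rho_R$, $\rho_R^1=\rho_R^{-1}$; a path of length $n+1$ from $x$ to $y$ is $\langle\bar z,\epsilon\rangle$ with $\bar z\in X^n$, $\epsilon\in\{0,1\}^{n+1}$, and $x\,\rho_R^{\epsilon_0}\,z_0\,\rho_R^{\epsilon_1}\cdots z_{n-1}\,\rho_R^{\epsilon_n}\,y$. $\mathbb X$ is connected iff any two points are joined by a path of some finite length. $\mathbb X\models\varphi^{\rm conn}_n$ means any two points are joined by a path of length $n+1$; $\mathbb X$ is of finite diameter iff this holds for some $n$. The ultraproduct $\prod_{\mathcal U}\mathbb X_i$ has universe $(\prod_i X_i)/\!\sim_{\mathcal U}$, where $x\sim_{\mathcal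 U}y$ iff $\{i:x_i=y_i\}\in\mathcal U$, and relation $[x]\,\rho\,[y]$ iff $\{i:x_i\,\rho_i\,y_i\}\in\mathcal U$; the ultrapower is the case $\mathbb X_i=\mathbb X$ for all $i$. "Smaller than the first measurable cardinal": below the least measurable cardinal if one exists, arbitrary otherwise. *)

theory Defs
  imports Main "HOL-Library.Countable_Set" "HOL-Library.FuncSet"
begin

definition L_structure :: "'a set \<Rightarrow> ('a \<times> 'a) set \<Rightarrow> bool" where
  "L_structure X r \<longleftrightarrow> X \<noteq> {} \<and> r \<subseteq> X \<times> X"

definition reflz :: "'a set \<Rightarrow> ('a \<times> 'a) set \<Rightarrow> ('a \<times> 'a) set" where
  "reflz X r = r \<union> Id_on X"

text \<open>A path of length m from x to y: points w_0 = x, w_1, ..., w_m = y in X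
  (the intermediate ones are z_0..z_(m-2)), each consecutive pair related by
  rho_R or its converse (the choice of epsilon_k).\<close>
definition path_of_length :: "'a set \<Rightarrow> ('a \<times> 'a) set \<Rightarrow> nat \<Rightarrow> 'a \<Rightarrow> 'a \<Rightarrow> bool" where
  "path_of_length X r m x y \<longleftrightarrow>
     (\<exists>ws. length ws = Suc m \<and> set ws \<subseteq> X \<and> ws ! 0 = x \<and> ws ! m = y \<and>
        (\<forall>k<m. (ws ! k, ws ! Suc k) \<in> reflz X r \<or> (ws ! k, ws ! Suc k) \<in> (reflz X r)\<inverse>))"

definition models_conn :: "nat \<Rightarrow> 'a set \<Rightarrow> ('a \<times> 'a) set \<Rightarrow> bool" where
  "models_conn n X r \<longleftrightarrow> (\<forall>x\<in>X. \<forall>y\<in>X. path_of_length X r (Suc n) x y)"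

definition connected_str :: "'a set \<Rightarrow> ('a \<times> 'a) set \<Rightarrow> bool" where
  "connected_str X r \<longleftrightarrow> (\<forall>x\<in>X. \<forall>y\<in>X. \<exists>n. path_of_length X r (Suc n) x y)"

definition finite_diameter :: "'a set \<Rightarrow> ('a \<times> 'a) set \<Rightarrow> bool" where
  "finite_diameter X r \<longleftrightarrow> (\<exists>n. models_conn n X r)"

definition ultrafilter_on :: "'i set \<Rightarrow> 'i set set \<Rightarrow> bool" where
  "ultrafilter_on I U \<longleftrightarrow>
     U \<subseteq> Pow I \<and> I \<in> U \<and> {} \<notin> U \<and>
     (\<forall>A\<in>U. \<forall>B. A \<subseteq> B \<and> B \<subseteq> I \<longrightarrow> B \<in> U) \<and>
     (\<forall>A\<in>U. \<forall>B\<in>U. A \<inter> B \<in> U) \<and>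
     (\<forall>A. A \<subseteq> I \<longrightarrow> A \<in> U \<or> I - A \<in> U)"

definition nonprincipal :: "'i set \<Rightarrow> 'i set set \<Rightarrow> bool" where
  "nonprincipal I U \<longleftrightarrow> \<not> (\<exists>i\<in>I. U = {A. A \<subseteq> I \<and> i \<in> A})"

definition ueq :: "'i set \<Rightarrow> 'i set set \<Rightarrow> ('i \<Rightarrow> 'a) set \<Rightarrow> (('i \<Rightarrow> 'a) \<times> ('i \<Rightarrow> 'a)) set" where
  "ueq I U P = {(f, g). f \<in> P \<and> g \<in> P \<and> {i\<in>I. f i = g i} \<in> U}"

definition uprod_univ :: "'i set \<Rightarrow> 'i set set \<Rightarrow> ('i \<Rightarrow> 'a set) \<Rightarrow> ('i \<Rightarrow> 'a) set set" where
  "uprod_univ I U X = (Pi I X) // ueq I U (Pi I X)"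

definition uprod_rel :: "'i set \<Rightarrow> 'i set set \<Rightarrow> ('i \<Rightarrow> 'a set) \<Rightarrow> ('i \<Rightarrow> ('a \<times> 'a) set)
     \<Rightarrow> (('i \<Rightarrow> 'a) set \<times> ('i \<Rightarrow> 'a) set) set" where
  "uprod_rel I U X r = {(A, B). A \<in> uprod_univ I U X \<and> B \<in> uprod_univ I U X \<and>
      (\<exists>f\<in>A. \<exists>g\<in>B. {i\<in>I. (f i, g i) \<in> r i} \<in> U)}"

text \<open>K (of cardinality kappa) is measurable: kappa uncountable and there is a non-principal
  kappa-complete ultrafilter on K; |F| < |K| is expressed as "no injection from K into F".\<close>
definition measurable_set :: "'a set \<Rightarrow> bool" where
  "measurable_set K \<longleftrightarrow> uncountable K \<and>
     (\<exists>V. ultrafilter_on K V \<and> nonprincipal K V \<and>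
        (\<forall>F. F \<subseteq> V \<and> F \<noteq> {} \<and> \<not> (\<exists>g. inj_on g K \<and> g ` K \<subseteq> F) \<longrightarrow> \<Inter>F \<in> V))"

text \<open>|I| is smaller than the first measurable cardinal (arbitrary if none exists):
  no measurable cardinal kappa <= |I|, i.e. no measurable subset of I.\<close>
definition below_first_measurable :: "'a set \<Rightarrow> bool" where
  "below_first_measurable I \<longleftrightarrow> \<not> (\<exists>K\<subseteq>I. measurable_set K)"

end

theory Submission
  imports Defs
begin

text \<open>
  A path of length \<open>m\<close> between two classes of the ultraproduct exists iff paths of length \<open>m\<close>
  between representatives exist in \<open>\<U>\<close>-almost every factor (a Los-type argument for the
  positive formula "there is a path of length \<open>m\<close>"). This gives the forward implications at once.

  Conversely, suppose that for every \<open>n\<close> almost every factor has two points not joined by a path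
  of length \<open>n + 1\<close>. If \<open>\<U>\<close> is countably incomplete there is \<open>\<kappa> : I \<rightarrow> \<nat>\<close>, unbounded
  modulo \<open>\<U>\<close>, such that factor \<open>i\<close> has two points \<open>f i, g i\<close> not joined by a path of length
  \<open>\<kappa> i + 1\<close>; then no path of any length joins the classes of \<open>f\<close> and \<open>g\<close>.
  Countable incompleteness is where the bound on \<open>|I|\<close> enters: if \<open>\<U>\<close> is nonprincipal and
  countably complete, take a map \<open>\<phi>\<close> on \<open>I\<close> whose fibres are all \<open>\<U>\<close>-small and whose image
  has least possible cardinality; the image of \<open>\<U>\<close> under \<open>\<phi>\<close> is then a nonprincipal
  ultrafilter on \<open>\<phi> ` I\<close> that is closed under intersections of fewer than \<open>|\<phi> ` I|\<close> sets
  (a failure would give a small-fibred map with smaller image), so \<open>\<phi> ` I\<close> is measurable.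
\<close>

unbundle cardinal_syntax

lemma ultrafilter_onD:
  assumes "ultrafilter_on I U"
  shows ultrafilter_on_subset: "A \<in> U \<Longrightarrow> A \<subseteq> I"
    and ultrafilter_on_top: "I \<in> U"
    and ultrafilter_on_empty: "{} \<notin> U"
    and ultrafilter_on_mono: "A \<in> U \<Longrightarrow> A \<subseteq> B \<Longrightarrow> B \<subseteq> I \<Longrightarrow> B \<in> U"
    and ultrafilter_on_Int: "A \<in> U \<Longrightarrow> B \<in> U \<Longrightarrow> A \<inter> B \<in> U"
    and ultrafilter_on_Diff: "A \<subseteq> I \<Longrightarrow> A \<notin> U \<Longrightarrow> I - A \<in> U"
  using assms unfolding ultrafilter_on_def by blast+

lemma ultrafilter_on_ex_mem: "ultrafilter_on I U \<Longrightarrow> A \<in> U \<Longrightarrow> \<exists>x. x \<in> A"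
  by (metis ultrafilter_on_empty ex_in_conv)

lemma ultrafilter_on_Un:
  assumes u: "ultrafilter_on I U" and AB: "A \<union> B \<in> U"
  shows "A \<in> U \<or> B \<in> U"
proof (rule ccontr)
  assume "\<not> (A \<in> U \<or> B \<in> U)"
  moreover have "A \<union> B \<subseteq> I" using ultrafilter_on_subset[OF u AB] .
  ultimately have "(I - A) \<inter> (I - B) \<in> U" using u by (simp add: ultrafilter_on_Diff ultrafilter_on_Int)
  with AB have "(A \<union> B) \<inter> ((I - A) \<inter> (I - B)) \<in> U" using u by (simp add: ultrafilter_on_Int)
  moreover have "(A \<union> B) \<inter> ((I - A) \<inter> (I - B)) = {}" by blast
  ultimately show False using ultrafilter_on_empty[OF u] by simp
qed

lemma ultrafilter_on_Un_iff:
  "ultrafilter_on I U \<Longrightarrow> A \<subseteq> I \<Longrightarrow> B \<subseteq> I \<Longrightarrow> A \<union> B \<in> U \<longleftrightarrow> A \<in> U \<or> B \<in> U"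
  using ultrafilter_on_Un ultrafilter_on_mono by (metis Un_least sup_ge1 sup_ge2)

lemma ultrafilter_on_all_less:
  assumes u: "ultrafilter_on I U" and P: "\<And>k. k < m \<Longrightarrow> {i\<in>I. P k i} \<in> U"
  shows "{i\<in>I. \<forall>k<(m::nat). P k i} \<in> U"
  using P
proof (induction m)
  case 0 thus ?case using ultrafilter_on_top[OF u] by simp
next
  case (Suc m)
  have "{i\<in>I. \<forall>k<Suc m. P k i} = {i\<in>I. \<forall>k<m. P k i} \<inter> {i\<in>I. P m i}"
    by (auto simp: less_Suc_eq)
  thus ?case using Suc by (simp add: ultrafilter_on_Int[OF u])
qed

lemma nonprincipal_singleton_notin:
  assumes u: "ultrafilter_on I U" and np: "nonprincipal I U" and i: "i \<in> I"
  shows "{i} \<notin> U"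
proof
  assume si: "{i} \<in> U"
  have "U = {A. A \<subseteq> I \<and> i \<in> A}"
  proof (intro set_eqI iffI)
    fix A assume "A \<in> U"
    thus "A \<in> {A. A \<subseteq> I \<and> i \<in> A}"
      using ultrafilter_on_Int[OF u _ si] ultrafilter_on_empty[OF u] ultrafilter_on_subset[OF u]
      by (metis Int_insert_right_if0 inf_bot_right mem_Collect_eq)
  next
    fix A assume "A \<in> {A. A \<subseteq> I \<and> i \<in> A}"
    thus "A \<in> U" using ultrafilter_on_mono[OF u si] by auto
  qed
  thus False using np i unfolding nonprincipal_def by blast
qed

section \<open>Countable incompleteness below the first measurable cardinal\<close>

definition countably_complete :: "'i set set \<Rightarrow> bool" where
  "countably_complete U \<longleftrightarrow> (\<forall>A :: nat \<Rightarrow> 'i set. range A \<subseteq> U \<longrightarrow> \<Inter>(range A) \<in> U)"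

definition small_fibres :: "'i set \<Rightarrow> 'i set set \<Rightarrow> ('i \<Rightarrow> 'k) \<Rightarrow> bool" where
  "small_fibres I U \<phi> \<longleftrightarrow> (\<forall>k. {i\<in>I. \<phi> i = k} \<notin> U)"

definition image_ultrafilter :: "'i set \<Rightarrow> 'i set set \<Rightarrow> ('i \<Rightarrow> 'k) \<Rightarrow> 'k set set" where
  "image_ultrafilter I U \<phi> = {S. S \<subseteq> \<phi> ` I \<and> {i\<in>I. \<phi> i \<in> S} \<in> U}"

lemma ultrafilter_on_image_ultrafilter:
  assumes u: "ultrafilter_on I U"
  shows "ultrafilter_on (\<phi> ` I) (image_ultrafilter I U \<phi>)"
  unfolding ultrafilter_on_def image_ultrafilter_def
proof (intro conjI ballI allI impI)
  have "{i\<in>I. \<phi> i \<in> \<phi> ` I} = I" by auto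
  thus "\<phi> ` I \<in> {S. S \<subseteq> \<phi> ` I \<and> {i\<in>I. \<phi> i \<in> S} \<in> U}" using ultrafilter_on_top[OF u] by simp
next
  fix A assume "A \<subseteq> \<phi> ` I"
  moreover have "{i\<in>I. \<phi> i \<in> \<phi> ` I - A} = I - {i\<in>I. \<phi> i \<in> A}" by auto
  ultimately show "A \<in> {S. S \<subseteq> \<phi> ` I \<and> {i\<in>I. \<phi> i \<in> S} \<in> U}
      \<or> \<phi> ` I - A \<in> {S. S \<subseteq> \<phi> ` I \<and> {i\<in>I. \<phi> i \<in> S} \<in> U}"
    using ultrafilter_on_Diff[OF u] by auto
next
  fix A B assume "A \<in> {S. S \<subseteq> \<phi> ` I \<and> {i\<in>I. \<phi> i \<in> S} \<in> U}"
    and "B \<in> {S. S \<subseteq> \<phi> ` I \<and> {i\<in>I. \<phi> i \<in> S} \<in> U}"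
  moreover have "{i\<in>I. \<phi> i \<in> A \<inter> B} = {i\<in>I. \<phi> i \<in> A} \<inter> {i\<in>I. \<phi> i \<in> B}" by auto
  ultimately show "A \<inter> B \<in> {S. S \<subseteq> \<phi> ` I \<and> {i\<in>I. \<phi> i \<in> S} \<in> U}"
    using ultrafilter_on_Int[OF u] by auto
next
  fix A B assume "A \<in> {S. S \<subseteq> \<phi> ` I \<and> {i\<in>I. \<phi> i \<in> S} \<in> U}" "A \<subseteq> B \<and> B \<subseteq> \<phi> ` I"
  thus "B \<in> {S. S \<subseteq> \<phi> ` I \<and> {i\<in>I. \<phi> i \<in> S} \<in> U}"
    using ultrafilter_on_mono[OF u, of "{i\<in>I. \<phi> i \<in> A}" "{i\<in>I. \<phi> i \<in> B}"] by auto
qed (use ultrafilter_on_empty[OF u] in auto)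

lemma nonprincipal_image_ultrafilter:
  assumes "small_fibres I U \<phi>"
  shows "nonprincipal (\<phi> ` I) (image_ultrafilter I U \<phi>)"
proof -
  have "{k} \<notin> image_ultrafilter I U \<phi>" for k
    using assms unfolding small_fibres_def image_ultrafilter_def by auto
  thus ?thesis unfolding nonprincipal_def by blast
qed

lemma small_fibres_uncountable_image:
  assumes u: "ultrafilter_on I U" and cc: "countably_complete U" and sf: "small_fibres I U \<phi>"
  shows "uncountable (\<phi> ` I)"
proof
  assume cK: "countable (\<phi> ` I)"
  have "I \<noteq> {}" using ultrafilter_on_top[OF u] ultrafilter_on_empty[OF u] by auto
  hence K: "\<phi> ` I \<noteq> {}" by simp
  define A where "A n = I - {i\<in>I. \<phi> i = from_nat_into (\<phi> ` I) n}" for n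
  have "A n \<in> U" for n
    unfolding A_def using sf by (intro ultrafilter_on_Diff[OF u]) (auto simp: small_fibres_def)
  hence "\<Inter>(range A) \<in> U" using cc unfolding countably_complete_def by blast
  moreover have "\<Inter>(range A) = {}"
  proof (rule equals0I)
    fix i assume i: "i \<in> \<Inter>(range A)"
    hence "i \<in> I" unfolding A_def by blast
    then obtain n where "from_nat_into (\<phi> ` I) n = \<phi> i" using from_nat_into_surj[OF cK] by blast
    hence "i \<notin> A n" using \<open>i \<in> I\<close> unfolding A_def by simp
    thus False using i by blast
  qed
  ultimately show False using ultrafilter_on_empty[OF u] by simp
qed

lemma small_fibres_reindex:
  assumes u: "ultrafilter_on I U" and sf: "small_fibres I U \<kappa>"
  obtains \<psi> where "\<psi> ` I \<subseteq> I" "small_fibres I U \<psi>" "|\<psi> ` I| \<le>o |\<kappa> ` I|"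
proof
  define \<psi> where "\<psi> i = (SOME j. j \<in> I \<and> \<kappa> j = \<kappa> i)" for i
  have \<psi>: "\<psi> i \<in> I \<and> \<kappa> (\<psi> i) = \<kappa> i" if "i \<in> I" for i
    unfolding \<psi>_def by (rule someI_ex) (use that in blast)
  thus "\<psi> ` I \<subseteq> I" by auto
  have "\<psi> ` I = (\<lambda>k. SOME j. j \<in> I \<and> \<kappa> j = k) ` \<kappa> ` I" unfolding \<psi>_def by auto
  thus "|\<psi> ` I| \<le>o |\<kappa> ` I|" by (simp only: card_of_image)
  show "small_fibres I U \<psi>" unfolding small_fibres_def
  proof
    fix k
    show "{i\<in>I. \<psi> i = k} \<notin> U"
    proof
      assume k: "{i\<in>I. \<psi> i = k} \<in> U"
      then obtain j where j: "j \<in> I" "\<psi> j = k" using ultrafilter_on_ex_mem[OF u] by blast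
      have "{i\<in>I. \<psi> i = k} \<subseteq> {i\<in>I. \<kappa> i = \<kappa> j}"
      proof
        fix i assume "i \<in> {i\<in>I. \<psi> i = k}"
        hence i: "i \<in> I" "\<psi> i = \<psi> j" using j by auto
        have "\<kappa> i = \<kappa> (\<psi> i)" using \<psi>[OF i(1)] by simp
        also have "\<dots> = \<kappa> j" using \<psi>[OF j(1)] i(2) by simp
        finally show "i \<in> {i\<in>I. \<kappa> i = \<kappa> j}" using i(1) by simp
      qed
      hence "{i\<in>I. \<kappa> i = \<kappa> j} \<in> U" by (rule ultrafilter_on_mono[OF u k]) auto
      thus False using sf unfolding small_fibres_def by blast
    qed
  qed
qed

lemma small_fibres_of_incomplete_family:
  assumes u: "ultrafilter_on I U" and AU: "\<A> \<subseteq> U" and nI: "I \<inter> \<Inter>\<A> \<notin> U"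
  obtains \<kappa> where "small_fibres I U \<kappa>" "\<kappa> ` I \<subseteq> insert None (Some ` \<A>)"
proof
  define \<kappa> where "\<kappa> i = (if i \<in> \<Inter>\<A> then None else Some (SOME A. A \<in> \<A> \<and> i \<notin> A))" for i
  have sel: "(SOME A. A \<in> \<A> \<and> i \<notin> A) \<in> \<A> \<and> i \<notin> (SOME A. A \<in> \<A> \<and> i \<notin> A)" if "i \<notin> \<Inter>\<A>" for i
    by (rule someI_ex) (use that in blast)
  thus "\<kappa> ` I \<subseteq> insert None (Some ` \<A>)" unfolding \<kappa>_def by auto
  show "small_fibres I U \<kappa>" unfolding small_fibres_def
  proof
    fix k
    show "{i\<in>I. \<kappa> i = k} \<notin> U"
    proof (cases k)
      case None
      hence "{i\<in>I. \<kappa> i = k} = I \<inter> \<Inter>\<A>" unfolding \<kappa>_def by auto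
      thus ?thesis using nI by simp
    next
      case (Some A)
      show ?thesis
      proof
        assume k: "{i\<in>I. \<kappa> i = k} \<in> U"
        then obtain j where "j \<in> I" "\<kappa> j = k" using ultrafilter_on_ex_mem[OF u] by blast
        hence "A \<in> \<A>" using sel Some unfolding \<kappa>_def by (auto split: if_splits)
        hence "{i\<in>I. \<kappa> i = k} \<inter> A \<in> U" using AU ultrafilter_on_Int[OF u k] by blast
        moreover have "{i\<in>I. \<kappa> i = k} \<inter> A = {}" using sel Some unfolding \<kappa>_def by auto
        ultimately show False using ultrafilter_on_empty[OF u] by simp
      qed
    qed
  qed
qed

lemma card_of_insert_image_ordLess:
  assumes "\<not> finite C" and "|A| <o |C|"
  shows "|insert a (f ` A)| <o |C|"
proof -
  have "|{a}| <o |C|"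
    by (rule finite_ordLess_infinite[OF card_of_Well_order card_of_Well_order, unfolded Field_card_of])
       (simp_all add: assms(1))
  moreover have "|f ` A| <o |C|" using card_of_image assms(2) by (rule ordLeq_ordLess_trans)
  ultimately show ?thesis using card_of_Un_ordLess_infinite[OF assms(1)] by (metis insert_is_Un)
qed

lemma minimal_small_fibres_measurable:
  assumes u: "ultrafilter_on I U" and cc: "countably_complete U" and sf: "small_fibres I U \<phi>"
    and min: "\<And>\<psi>. \<psi> ` I \<subseteq> I \<Longrightarrow> small_fibres I U \<psi> \<Longrightarrow> \<not> |\<psi> ` I| <o |\<phi> ` I|"
  shows "measurable_set (\<phi> ` I)"
  unfolding measurable_set_def
proof (intro conjI exI allI impI)
  let ?K = "\<phi> ` I" and ?V = "image_ultrafilter I U \<phi>"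
  show unc: "uncountable ?K" using small_fibres_uncountable_image[OF u cc sf] .
  show "ultrafilter_on ?K ?V" using ultrafilter_on_image_ultrafilter[OF u] .
  show "nonprincipal ?K ?V" using nonprincipal_image_ultrafilter[OF sf] .
  fix F assume F: "F \<subseteq> ?V \<and> F \<noteq> {} \<and> \<not> (\<exists>g. inj_on g ?K \<and> g ` ?K \<subseteq> F)"
  hence F_less: "|F| <o |?K|" using card_of_ordLess[of ?K F] by simp
  have K_inf: "\<not> finite ?K" using unc countable_finite by blast
  show "\<Inter>F \<in> ?V"
  proof (rule ccontr)
    assume notin: "\<Inter>F \<notin> ?V"
    define \<A> where "\<A> = (\<lambda>S. {i\<in>I. \<phi> i \<in> S}) ` F"
    have "\<A> \<subseteq> U" using F unfolding \<A>_def image_ultrafilter_def by auto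
    moreover have "I \<inter> \<Inter>\<A> \<notin> U"
    proof -
      have "\<Inter>F \<subseteq> ?K" using F unfolding image_ultrafilter_def by auto
      hence "{i\<in>I. \<phi> i \<in> \<Inter>F} \<notin> U" using notin unfolding image_ultrafilter_def by auto
      moreover have "I \<inter> \<Inter>\<A> = {i\<in>I. \<phi> i \<in> \<Inter>F}" unfolding \<A>_def by auto
      ultimately show ?thesis by simp
    qed
    ultimately obtain \<kappa> where \<kappa>: "small_fibres I U \<kappa>" "\<kappa> ` I \<subseteq> insert None (Some ` \<A>)"
      using small_fibres_of_incomplete_family[OF u] by blast
    obtain \<psi> where \<psi>: "\<psi> ` I \<subseteq> I" "small_fibres I U \<psi>" "|\<psi> ` I| \<le>o |\<kappa> ` I|"
      using small_fibres_reindex[OF u \<kappa>(1)] by blast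
    have "|\<A>| <o |?K|" unfolding \<A>_def using card_of_image F_less by (rule ordLeq_ordLess_trans)
    hence "|insert None (Some ` \<A>)| <o |?K|" by (rule card_of_insert_image_ordLess[OF K_inf])
    hence "|\<psi> ` I| <o |?K|"
      using ordLeq_ordLess_trans[OF \<psi>(3) ordLeq_ordLess_trans[OF card_of_mono1[OF \<kappa>(2)]]] by blast
    thus False using min[OF \<psi>(1,2)] by blast
  qed
qed

lemma countably_complete_imp_measurable_subset:
  fixes I :: "'i set"
  assumes u: "ultrafilter_on I U" and np: "nonprincipal I U" and cc: "countably_complete U"
  shows "\<exists>K\<subseteq>I. measurable_set K"
proof -
  define \<Phi> where "\<Phi> = {\<phi> :: 'i \<Rightarrow> 'i. \<phi> ` I \<subseteq> I \<and> small_fibres I U \<phi>}"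
  have "id \<in> \<Phi>"
    using nonprincipal_singleton_notin[OF u np] ultrafilter_on_empty[OF u]
    unfolding \<Phi>_def small_fibres_def by (auto simp: Collect_conj_eq Int_insert_right)
  then obtain \<phi> where \<phi>: "\<phi> \<in> \<Phi>" and min: "\<And>\<psi>. \<psi> \<in> \<Phi> \<Longrightarrow> \<not> |\<psi> ` I| <o |\<phi> ` I|"
    using wfE_min[OF wf_inv_image[OF wf_ordLess, of "\<lambda>\<phi>. |\<phi> ` I|"]] unfolding in_inv_image
    by metis
  have "measurable_set (\<phi> ` I)"
    using minimal_small_fibres_measurable[OF u cc] \<phi> min unfolding \<Phi>_def by blast
  thus ?thesis using \<phi> unfolding \<Phi>_def by blast
qed

lemma countably_incomplete_below_first_measurable:
  fixes I :: "'i set"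
  assumes "ultrafilter_on I U" and "nonprincipal I U" and "below_first_measurable I"
  obtains C :: "nat \<Rightarrow> 'i set" where "range C \<subseteq> U" "\<Inter>(range C) \<notin> U"
  using countably_complete_imp_measurable_subset[OF assms(1,2)] assms(3)
  unfolding below_first_measurable_def countably_complete_def by blast

lemma countably_incomplete_unbounded:
  fixes C B :: "nat \<Rightarrow> 'i set"
  assumes u: "ultrafilter_on I U" and C: "range C \<subseteq> U" "\<Inter>(range C) \<notin> U"
    and B: "\<And>n. B n \<in> U"
  obtains \<kappa> :: "'i \<Rightarrow> nat" where "\<And>m. {i\<in>I. i \<in> B (\<kappa> i) \<and> m \<le> \<kappa> i} \<in> U"
proof
  define E where "E n = {i\<in>I. \<forall>k<Suc n. i \<in> C k \<inter> B k}" for n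
  have E: "E n \<in> U" for n
    unfolding E_def
  proof (rule ultrafilter_on_all_less[OF u])
    fix k
    have "C k \<inter> B k \<in> U" using C(1) B ultrafilter_on_Int[OF u] by blast
    moreover have "{i\<in>I. i \<in> C k \<inter> B k} = C k \<inter> B k"
      using ultrafilter_on_subset[OF u calculation] by blast
    ultimately show "{i\<in>I. i \<in> C k \<inter> B k} \<in> U" by simp
  qed
  have E_anti: "i \<in> E n \<Longrightarrow> m \<le> n \<Longrightarrow> i \<in> E m" for i m n unfolding E_def by auto
  have "\<Inter>(range E) \<notin> U"
  proof
    assume "\<Inter>(range E) \<in> U"
    hence "\<Inter>(range C) \<in> U"
      by (rule ultrafilter_on_mono[OF u])
        (use C(1) ultrafilter_on_subset[OF u, of "C 0"] in \<open>auto simp: E_def\<close>)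
    thus False using C(2) by blast
  qed
  hence G: "I - \<Inter>(range E) \<in> U" by (rule ultrafilter_on_Diff[OF u, rotated]) (auto simp: E_def)
  \<comment> \<open>\<open>E\<close> decreases and almost every \<open>i\<close> eventually leaves it; \<open>\<kappa> i\<close> is the last stage containing \<open>i\<close>
    (a junk value elsewhere).\<close>
  define \<kappa> where "\<kappa> i = (GREATEST n. i \<in> E n)" for i
  fix m
  have "E m \<inter> (I - \<Inter>(range E)) \<in> U" using ultrafilter_on_Int[OF u E G] .
  moreover have "E m \<inter> (I - \<Inter>(range E)) \<subseteq> {i\<in>I. i \<in> B (\<kappa> i) \<and> m \<le> \<kappa> i}"
  proof
    fix i assume i: "i \<in> E m \<inter> (I - \<Inter>(range E))"
    then obtain N where "i \<notin> E N" by blast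
    hence bound: "n \<le> N" if "i \<in> E n" for n using E_anti[OF that, of N] nat_le_linear by blast
    have "i \<in> E m" using i by blast
    have "i \<in> E (\<kappa> i)" unfolding \<kappa>_def using \<open>i \<in> E m\<close> bound by (rule GreatestI_nat)
    moreover have "m \<le> \<kappa> i" unfolding \<kappa>_def using \<open>i \<in> E m\<close> bound by (rule Greatest_le_nat)
    ultimately show "i \<in> {i\<in>I. i \<in> B (\<kappa> i) \<and> m \<le> \<kappa> i}" unfolding E_def by auto
  qed
  ultimately show "{i\<in>I. i \<in> B (\<kappa> i) \<and> m \<le> \<kappa> i} \<in> U"
    by (rule ultrafilter_on_mono[OF u]) auto
qed

section \<open>Paths in ultraproducts\<close>

definition adjacent :: "'a set \<Rightarrow> ('a \<times> 'a) set \<Rightarrow> ('a \<times> 'a) set" where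
  "adjacent X r = reflz X r \<union> (reflz X r)\<inverse>"

lemma path_of_length_iff_walk:
  "path_of_length X r m x y \<longleftrightarrow>
     (\<exists>w. w 0 = x \<and> w m = y \<and> (\<forall>k\<le>m. w k \<in> X) \<and> (\<forall>k<m. (w k, w (Suc k)) \<in> adjacent X r))"
proof
  assume "path_of_length X r m x y"
  then obtain ws where "length ws = Suc m" "set ws \<subseteq> X" "ws ! 0 = x" "ws ! m = y"
      "\<forall>k<m. (ws ! k, ws ! Suc k) \<in> adjacent X r"
    unfolding path_of_length_def adjacent_def by auto
  thus "\<exists>w. w 0 = x \<and> w m = y \<and> (\<forall>k\<le>m. w k \<in> X) \<and> (\<forall>k<m. (w k, w (Suc k)) \<in> adjacent X r)"
    by (intro exI[of _ "(!) ws"]) (auto dest: nth_mem)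
next
  assume "\<exists>w. w 0 = x \<and> w m = y \<and> (\<forall>k\<le>m. w k \<in> X) \<and> (\<forall>k<m. (w k, w (Suc k)) \<in> adjacent X r)"
  then obtain w where "w 0 = x" "w m = y" "\<forall>k\<le>m. w k \<in> X" "\<forall>k<m. (w k, w (Suc k)) \<in> adjacent X r"
    by blast
  thus "path_of_length X r m x y"
    unfolding path_of_length_def adjacent_def
    by (intro exI[of _ "map w [0..<Suc m]"]) (auto simp del: upt_Suc simp: nth_map_upt)
qed

lemma path_of_length_mono:
  assumes "path_of_length X r m x y" and "m \<le> m'"
  shows "path_of_length X r m' x y"
proof -
  obtain w where w: "w 0 = x" "w m = y" "\<forall>k\<le>m. w k \<in> X" "\<forall>k<m. (w k, w (Suc k)) \<in> adjacent X r"
    using assms(1) unfolding path_of_length_iff_walk by blast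
  have "(w (min k m), w (min (Suc k) m)) \<in> adjacent X r" for k
  proof (cases "k < m")
    case False
    thus ?thesis using w(3) unfolding adjacent_def reflz_def by auto
  qed (use w(4) in auto)
  thus ?thesis unfolding path_of_length_iff_walk
    using w assms(2) by (intro exI[of _ "\<lambda>k. w (min k m)"]) (auto simp: min_absorb2)
qed

definition uclass :: "'i set \<Rightarrow> 'i set set \<Rightarrow> ('i \<Rightarrow> 'a set) \<Rightarrow> ('i \<Rightarrow> 'a) \<Rightarrow> ('i \<Rightarrow> 'a) set" where
  "uclass I U X f = ueq I U (Pi I X) `` {f}"

lemma ueq_equiv:
  assumes u: "ultrafilter_on I U"
  shows "equiv (Pi I X) (ueq I U (Pi I X))"
proof (rule equivI)
  show "refl_on (Pi I X) (ueq I U (Pi I X))"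
    unfolding refl_on_def ueq_def using ultrafilter_on_top[OF u] by auto
  show "sym (ueq I U (Pi I X))"
    unfolding sym_def ueq_def by (auto simp: eq_commute)
  show "trans (ueq I U (Pi I X))"
  proof (rule transI)
    fix f g h assume fg: "(f, g) \<in> ueq I U (Pi I X)" and gh: "(g, h) \<in> ueq I U (Pi I X)"
    hence "{i\<in>I. f i = g i} \<inter> {i\<in>I. g i = h i} \<in> U"
      unfolding ueq_def using ultrafilter_on_Int[OF u] by auto
    hence "{i\<in>I. f i = h i} \<in> U" by (rule ultrafilter_on_mono[OF u]) auto
    thus "(f, h) \<in> ueq I U (Pi I X)" using fg gh unfolding ueq_def by auto
  qed
qed (auto simp: ueq_def)

lemma uclass_in_uprod_univ: "f \<in> Pi I X \<Longrightarrow> uclass I U X f \<in> uprod_univ I U X"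
  unfolding uprod_univ_def uclass_def by (rule quotientI)

lemma uprod_univE:
  assumes "W \<in> uprod_univ I U X"
  obtains f where "f \<in> Pi I X" "W = uclass I U X f"
  using assms unfolding uprod_univ_def uclass_def by (auto elim: quotientE)

lemma mem_uclass_iff:
  "f \<in> Pi I X \<Longrightarrow> g \<in> uclass I U X f \<longleftrightarrow> g \<in> Pi I X \<and> {i\<in>I. f i = g i} \<in> U"
  unfolding uclass_def ueq_def by auto

lemma uclass_eq_iff:
  assumes "ultrafilter_on I U" and "f \<in> Pi I X" and "g \<in> Pi I X"
  shows "uclass I U X f = uclass I U X g \<longleftrightarrow> {i\<in>I. f i = g i} \<in> U"
  using eq_equiv_class_iff[OF ueq_equiv[OF assms(1)] assms(2,3)] assms(2,3)
  unfolding uclass_def ueq_def by blast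

lemma uprod_rel_uclass_iff:
  assumes u: "ultrafilter_on I U" and f: "f \<in> Pi I X" and g: "g \<in> Pi I X"
  shows "(uclass I U X f, uclass I U X g) \<in> uprod_rel I U X r \<longleftrightarrow> {i\<in>I. (f i, g i) \<in> r i} \<in> U"
proof
  assume "(uclass I U X f, uclass I U X g) \<in> uprod_rel I U X r"
  then obtain f' g' where f': "f' \<in> uclass I U X f" and g': "g' \<in> uclass I U X g"
    and rel: "{i\<in>I. (f' i, g' i) \<in> r i} \<in> U"
    unfolding uprod_rel_def by auto
  have "{i\<in>I. f i = f' i} \<inter> {i\<in>I. g i = g' i} \<inter> {i\<in>I. (f' i, g' i) \<in> r i} \<in> U"
    using f' g' rel mem_uclass_iff[OF f] mem_uclass_iff[OF g] ultrafilter_on_Int[OF u] by simp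
  thus "{i\<in>I. (f i, g i) \<in> r i} \<in> U" by (rule ultrafilter_on_mono[OF u]) auto
next
  assume "{i\<in>I. (f i, g i) \<in> r i} \<in> U"
  moreover have "f \<in> uclass I U X f" "g \<in> uclass I U X g"
    using f g ultrafilter_on_top[OF u] by (simp_all add: mem_uclass_iff)
  ultimately show "(uclass I U X f, uclass I U X g) \<in> uprod_rel I U X r"
    unfolding uprod_rel_def using f g uclass_in_uprod_univ by blast
qed

lemma reflz_uclass_iff:
  assumes u: "ultrafilter_on I U" and f: "f \<in> Pi I X" and g: "g \<in> Pi I X"
  shows "(uclass I U X f, uclass I U X g) \<in> reflz (uprod_univ I U X) (uprod_rel I U X r)
     \<longleftrightarrow> {i\<in>I. (f i, g i) \<in> reflz (X i) (r i)} \<in> U"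
proof -
  have "(uclass I U X f, uclass I U X g) \<in> reflz (uprod_univ I U X) (uprod_rel I U X r)
      \<longleftrightarrow> (uclass I U X f, uclass I U X g) \<in> uprod_rel I U X r \<or> uclass I U X f = uclass I U X g"
    unfolding reflz_def using uclass_in_uprod_univ[OF f] uclass_in_uprod_univ[OF g] by auto
  also have "\<dots> \<longleftrightarrow> {i\<in>I. (f i, g i) \<in> r i} \<in> U \<or> {i\<in>I. f i = g i} \<in> U"
    by (simp add: uprod_rel_uclass_iff[OF u f g] uclass_eq_iff[OF u f g])
  also have "\<dots> \<longleftrightarrow> {i\<in>I. (f i, g i) \<in> r i} \<union> {i\<in>I. f i = g i} \<in> U"
    by (rule ultrafilter_on_Un_iff[OF u, symmetric]) auto
  also have "{i\<in>I. (f i, g i) \<in> r i} \<union> {i\<in>I. f i = g i} = {i\<in>I. (f i, g i) \<in> reflz (X i) (r i)}"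
    using f unfolding reflz_def Pi_iff by fastforce
  finally show ?thesis .
qed

lemma adjacent_uclass_iff:
  assumes u: "ultrafilter_on I U" and f: "f \<in> Pi I X" and g: "g \<in> Pi I X"
  shows "(uclass I U X f, uclass I U X g) \<in> adjacent (uprod_univ I U X) (uprod_rel I U X r)
     \<longleftrightarrow> {i\<in>I. (f i, g i) \<in> adjacent (X i) (r i)} \<in> U"
proof -
  have "(uclass I U X f, uclass I U X g) \<in> adjacent (uprod_univ I U X) (uprod_rel I U X r)
      \<longleftrightarrow> {i\<in>I. (f i, g i) \<in> reflz (X i) (r i)} \<in> U \<or> {i\<in>I. (g i, f i) \<in> reflz (X i) (r i)} \<in> U"
    unfolding adjacent_def by (simp add: reflz_uclass_iff[OF u f g] reflz_uclass_iff[OF u g f])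
  also have "\<dots> \<longleftrightarrow> {i\<in>I. (f i, g i) \<in> reflz (X i) (r i)} \<union> {i\<in>I. (g i, f i) \<in> reflz (X i) (r i)} \<in> U"
    by (rule ultrafilter_on_Un_iff[OF u, symmetric]) auto
  also have "{i\<in>I. (f i, g i) \<in> reflz (X i) (r i)} \<union> {i\<in>I. (g i, f i) \<in> reflz (X i) (r i)}
      = {i\<in>I. (f i, g i) \<in> adjacent (X i) (r i)}"
    unfolding adjacent_def by auto
  finally show ?thesis .
qed

lemma path_of_length_uclassI:
  assumes u: "ultrafilter_on I U" and f: "f \<in> Pi I X" and g: "g \<in> Pi I X"
    and A: "{i\<in>I. path_of_length (X i) (r i) m (f i) (g i)} \<in> U"
  shows "path_of_length (uprod_univ I U X) (uprod_rel I U X r) m (uclass I U X f) (uclass I U X g)"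
proof -
  define A where "A = {i\<in>I. path_of_length (X i) (r i) m (f i) (g i)}"
  have "\<forall>i\<in>A. \<exists>v. v 0 = f i \<and> v m = g i \<and> (\<forall>k\<le>m. v k \<in> X i)
      \<and> (\<forall>k<m. (v k, v (Suc k)) \<in> adjacent (X i) (r i))"
    unfolding A_def path_of_length_iff_walk by blast
  from bchoice[OF this] obtain w where w: "\<forall>i\<in>A. w i 0 = f i \<and> w i m = g i
      \<and> (\<forall>k\<le>m. w i k \<in> X i) \<and> (\<forall>k<m. (w i k, w i (Suc k)) \<in> adjacent (X i) (r i))"
    by blast
  define h where "h k i = (if i \<in> A then w i k else f i)" for k i
  have h: "h k \<in> Pi I X" if "k \<le> m" for k
    using w f that unfolding h_def by auto
  have A_U: "A \<in> U" and A_I: "A \<subseteq> I" using A unfolding A_def by auto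
  have "{i\<in>I. h 0 i = f i} \<in> U" "{i\<in>I. h m i = g i} \<in> U"
    by (rule ultrafilter_on_mono[OF u A_U], use w A_I in \<open>auto simp: h_def\<close>)+
  hence ends: "uclass I U X (h 0) = uclass I U X f" "uclass I U X (h m) = uclass I U X g"
    by (simp_all add: uclass_eq_iff[OF u h f] uclass_eq_iff[OF u h g])
  have "{i\<in>I. (h k i, h (Suc k) i) \<in> adjacent (X i) (r i)} \<in> U" if "k < m" for k
    by (rule ultrafilter_on_mono[OF u A_U]) (use w A_I that in \<open>auto simp: h_def\<close>)
  hence "(uclass I U X (h k), uclass I U X (h (Suc k))) \<in> adjacent (uprod_univ I U X) (uprod_rel I U X r)"
    if "k < m" for k
    using adjacent_uclass_iff[OF u h h] that by simp
  thus ?thesis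
    unfolding path_of_length_iff_walk using ends uclass_in_uprod_univ[OF h]
    by (intro exI[of _ "\<lambda>k. uclass I U X (h k)"]) auto
qed

lemma path_of_length_uclassD:
  assumes u: "ultrafilter_on I U" and f: "f \<in> Pi I X" and g: "g \<in> Pi I X"
    and P: "path_of_length (uprod_univ I U X) (uprod_rel I U X r) m (uclass I U X f) (uclass I U X g)"
  shows "{i\<in>I. path_of_length (X i) (r i) m (f i) (g i)} \<in> U"
proof -
  obtain W where W: "W 0 = uclass I U X f" "W m = uclass I U X g" "\<forall>k\<le>m. W k \<in> uprod_univ I U X"
      "\<forall>k<m. (W k, W (Suc k)) \<in> adjacent (uprod_univ I U X) (uprod_rel I U X r)"
    using P unfolding path_of_length_iff_walk by blast
  obtain h where h: "\<forall>k\<le>m. h k \<in> Pi I X \<and> W k = uclass I U X (h k)"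
    using W(3) uprod_univE choice[of "\<lambda>k h. k \<le> m \<longrightarrow> h \<in> Pi I X \<and> W k = uclass I U X h"]
    by metis
  let ?S = "{i\<in>I. f i = h 0 i} \<inter> {i\<in>I. h m i = g i}
      \<inter> {i\<in>I. \<forall>k<m. (h k i, h (Suc k) i) \<in> adjacent (X i) (r i)}"
  have "{i\<in>I. f i = h 0 i} \<in> U" "{i\<in>I. h m i = g i} \<in> U"
    using W(1,2) h uclass_eq_iff[OF u f, of "h 0"] uclass_eq_iff[OF u _ g, of "h m"] by simp_all
  moreover have "{i\<in>I. (h k i, h (Suc k) i) \<in> adjacent (X i) (r i)} \<in> U" if "k < m" for k
  proof -
    have "(W k, W (Suc k)) \<in> adjacent (uprod_univ I U X) (uprod_rel I U X r)" using W(4) that by blast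
    moreover have "h k \<in> Pi I X" "h (Suc k) \<in> Pi I X" "W k = uclass I U X (h k)"
      "W (Suc k) = uclass I U X (h (Suc k))" using h that by auto
    ultimately show ?thesis using adjacent_uclass_iff[OF u, of "h k" X "h (Suc k)" r] by simp
  qed
  hence "{i\<in>I. \<forall>k<m. (h k i, h (Suc k) i) \<in> adjacent (X i) (r i)} \<in> U"
    by (rule ultrafilter_on_all_less[OF u])
  ultimately have "?S \<in> U" by (simp add: ultrafilter_on_Int[OF u])
  moreover have "?S \<subseteq> {i\<in>I. path_of_length (X i) (r i) m (f i) (g i)}"
  proof
    fix i assume i: "i \<in> ?S"
    hence "path_of_length (X i) (r i) m (f i) (g i)"
      unfolding path_of_length_iff_walk using h by (intro exI[of _ "\<lambda>k. h k i"]) auto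
    thus "i \<in> {i\<in>I. path_of_length (X i) (r i) m (f i) (g i)}" using i by simp
  qed
  ultimately show ?thesis by (rule ultrafilter_on_mono[OF u]) auto
qed

lemma connected_uprod_if_models_conn:
  assumes u: "ultrafilter_on I U" and A: "{i\<in>I. models_conn n (X i) (r i)} \<in> U"
  shows "connected_str (uprod_univ I U X) (uprod_rel I U X r)"
  unfolding connected_str_def
proof (intro ballI exI)
  fix W W' assume "W \<in> uprod_univ I U X" "W' \<in> uprod_univ I U X"
  then obtain f g where f: "f \<in> Pi I X" "W = uclass I U X f" and g: "g \<in> Pi I X" "W' = uclass I U X g"
    by (metis uprod_univE)
  have "{i\<in>I. path_of_length (X i) (r i) (Suc n) (f i) (g i)} \<in> U"
    by (rule ultrafilter_on_mono[OF u A]) (use f g in \<open>auto simp: models_conn_def\<close>)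
  thus "path_of_length (uprod_univ I U X) (uprod_rel I U X r) (Suc n) W W'"
    using path_of_length_uclassI[OF u f(1) g(1)] f g by simp
qed

lemma models_conn_if_connected_uprod:
  assumes u: "ultrafilter_on I U" and np: "nonprincipal I U" and bm: "below_first_measurable I"
    and ne: "\<forall>i\<in>I. X i \<noteq> {}"
    and conn: "connected_str (uprod_univ I U X) (uprod_rel I U X r)"
  shows "\<exists>n. {i\<in>I. models_conn n (X i) (r i)} \<in> U"
proof (rule ccontr)
  assume none: "\<not> ?thesis"
  define B where "B n = {i\<in>I. \<not> models_conn n (X i) (r i)}" for n
  have B: "B n \<in> U" for n
  proof -
    have "I - {i\<in>I. models_conn n (X i) (r i)} \<in> U"
      using none by (intro ultrafilter_on_Diff[OF u]) auto
    moreover have "I - {i\<in>I. models_conn n (X i) (r i)} = B n" unfolding B_def by blast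
    ultimately show ?thesis by simp
  qed
  obtain C :: "nat \<Rightarrow> _" where C: "range C \<subseteq> U" "\<Inter>(range C) \<notin> U"
    by (rule countably_incomplete_below_first_measurable[OF u np bm])
  obtain \<kappa> where \<kappa>: "\<And>m. {i\<in>I. i \<in> B (\<kappa> i) \<and> m \<le> \<kappa> i} \<in> U"
    using countably_incomplete_unbounded[of I U C B, OF u C B] by metis
  have "\<forall>i\<in>I. \<exists>p. fst p \<in> X i \<and> snd p \<in> X i
      \<and> (i \<in> B (\<kappa> i) \<longrightarrow> \<not> path_of_length (X i) (r i) (Suc (\<kappa> i)) (fst p) (snd p))"
  proof
    fix i assume "i \<in> I"
    show "\<exists>p. fst p \<in> X i \<and> snd p \<in> X i
      \<and> (i \<in> B (\<kappa> i) \<longrightarrow> \<not> path_of_length (X i) (r i) (Suc (\<kappa> i)) (fst p) (snd p))"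
    proof (cases "i \<in> B (\<kappa> i)")
      case True
      then obtain x y where "x \<in> X i" "y \<in> X i" "\<not> path_of_length (X i) (r i) (Suc (\<kappa> i)) x y"
        unfolding B_def models_conn_def by blast
      thus ?thesis by (intro exI[of _ "(x, y)"]) simp
    next
      case False
      obtain x where "x \<in> X i" using ne \<open>i \<in> I\<close> by blast
      thus ?thesis using False by (intro exI[of _ "(x, x)"]) simp
    qed
  qed
  from bchoice[OF this] obtain p where p: "\<forall>i\<in>I. fst (p i) \<in> X i \<and> snd (p i) \<in> X i
      \<and> (i \<in> B (\<kappa> i) \<longrightarrow> \<not> path_of_length (X i) (r i) (Suc (\<kappa> i)) (fst (p i)) (snd (p i)))"
    by blast
  define f g where "f i = fst (p i)" and "g i = snd (p i)" for i
  have f: "f \<in> Pi I X" and g: "g \<in> Pi I X" unfolding f_def g_def using p by auto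
  obtain m where "path_of_length (uprod_univ I U X) (uprod_rel I U X r) (Suc m) (uclass I U X f) (uclass I U X g)"
    using conn uclass_in_uprod_univ[OF f] uclass_in_uprod_univ[OF g] unfolding connected_str_def by blast
  from path_of_length_uclassD[OF u f g this]
  have "{i\<in>I. path_of_length (X i) (r i) (Suc m) (f i) (g i)}
      \<inter> {i\<in>I. i \<in> B (\<kappa> i) \<and> Suc m \<le> \<kappa> i} \<in> U"
    using \<kappa> by (rule ultrafilter_on_Int[OF u])
  then obtain i where i: "i \<in> I" "path_of_length (X i) (r i) (Suc m) (f i) (g i)"
    "i \<in> B (\<kappa> i)" "Suc m \<le> \<kappa> i"
    using ultrafilter_on_ex_mem[OF u] by blast
  have "path_of_length (X i) (r i) (Suc (\<kappa> i)) (f i) (g i)"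
    using path_of_length_mono[OF i(2)] i(4) by simp
  thus False using p i(1,3) unfolding f_def g_def by blast
qed

theorem corollary2p6:
  fixes I :: "'i set" and U :: "'i set set"
    and X :: "'i \<Rightarrow> 'a set" and r :: "'i \<Rightarrow> ('a \<times> 'a) set"
    and Y :: "'b set" and s :: "('b \<times> 'b) set"
  assumes "infinite I"
    and "ultrafilter_on I U"
    and "nonprincipal I U"
    and "\<forall>i\<in>I. L_structure (X i) (r i)"
    and "L_structure Y s"
  shows "((\<exists>n. {i\<in>I. models_conn n (X i) (r i)} \<in> U)
            \<longrightarrow> connected_str (uprod_univ I U X) (uprod_rel I U X r))
       \<and> (below_first_measurable I \<longrightarrow>
            connected_str (uprod_univ I U X) (uprod_rel I U X r)
            \<longrightarrow> (\<exists>n. {i\<in>I. models_conn n (X i) (r i)} \<in> U))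
       \<and> (finite_diameter Y s
            \<longrightarrow> connected_str (uprod_univ I U (\<lambda>_. Y)) (uprod_rel I U (\<lambda>_. Y) (\<lambda>_. s)))
       \<and> (below_first_measurable I \<longrightarrow>
            connected_str (uprod_univ I U (\<lambda>_. Y)) (uprod_rel I U (\<lambda>_. Y) (\<lambda>_. s))
            \<longrightarrow> finite_diameter Y s)"
proof -
  \<comment> \<open>\<open>infinite I\<close> is implied by nonprincipality, and of \<open>L_structure\<close> only nonemptiness is used.\<close>
  have u: "ultrafilter_on I U" and np: "nonprincipal I U" using assms(2,3) .
  have ne: "\<forall>i\<in>I. X i \<noteq> {}" and neY: "\<forall>i\<in>I. Y \<noteq> {}"
    using assms(4,5) unfolding L_structure_def by auto
  have const: "{i\<in>I. models_conn n Y s} \<in> U \<longleftrightarrow> models_conn n Y s" for n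
    using ultrafilter_on_top[OF u] ultrafilter_on_empty[OF u] by (cases "models_conn n Y s") auto
  show ?thesis
  proof (intro conjI impI)
    show "connected_str (uprod_univ I U X) (uprod_rel I U X r)"
      if "\<exists>n. {i\<in>I. models_conn n (X i) (r i)} \<in> U"
      using that connected_uprod_if_models_conn[OF u] by blast
    show "\<exists>n. {i\<in>I. models_conn n (X i) (r i)} \<in> U"
      if "below_first_measurable I" and "connected_str (uprod_univ I U X) (uprod_rel I U X r)"
      using models_conn_if_connected_uprod[OF u np that(1) ne that(2)] .
    show "connected_str (uprod_univ I U (\<lambda>_. Y)) (uprod_rel I U (\<lambda>_. Y) (\<lambda>_. s))"
      if "finite_diameter Y s"
      using that connected_uprod_if_models_conn[OF u, of _ "\<lambda>_. Y" "\<lambda>_. s"] const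
      unfolding finite_diameter_def by auto
    show "finite_diameter Y s"
      if "below_first_measurable I"
        and "connected_str (uprod_univ I U (\<lambda>_. Y)) (uprod_rel I U (\<lambda>_. Y) (\<lambda>_. s))"
      using models_conn_if_connected_uprod[OF u np that(1) neY that(2)] const
      unfolding finite_diameter_def by simp
  qed
qed

end
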